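(* Let $\mathcal{S} = (X, \xrightarrow{\Sigma}, \leq)$ be a very-WSTS and let $I_0$ be an ideal of $X$. Then the Ideal Karp-Miller algorithm, run on $\mathcal{S}$ from $I_0$, terminates.
   Context: A labeled transition system $\mathcal{S} = (X, \xrightarrow{\Sigma}, \leq)$ consists of a set $X$ of states, a finite alphabet $\Sigma$, a relation $\xrightarrow{a} \subseteq X \times X$ for each $a \in \Sigma$, and a quasi-ordering $\leq$ on $X$. It is a WSTS if $\leq$ is a well-quasi-ordering and it is monotone (if $x \xrightarrow{a} y$ and $x' \geq x$ then $x' \xrightarrow{*} y'$ for some $y' \geq y$). It has strong monotonicity if $x \xrightarrow{a} y$ and $x' \geq x$ imply $x' \xrightarrow{a} y'$ for some $y' \geq y$; it has strong-strict monotonicity if moreover $x \xrightarrow{a} y$ and $x' > x$ imply $x' \xrightarrow{a} y'$ for some $y' > y$. It is deterministic if each state has at most one $a$-successor for each $a \in \Sigma$. An ideal of $X$ is a nonempty downwards-closed directed subset of $X$; $\mathrm{Idl}(X)$ denotes the set of ideals. For a downwards-closed $D \subseteq X$, its ideal decomposition is the (finite) set of maximal ideals contained in $D$. The completion of $\mathcal{S}$ is the transition system $(\mathrm{Idl}(X), \xrightarrow{\Sigma}_{c}, \subseteq)$ where $I \xrightarrow{a}_{c} J$ iff $J$ belongs to the ideal decomposition of the downward closure of the set of $a$-successors of elements of $I$; it is finitely branching. When the completion is deterministic, $w(I)$ denotes the unique $w$-successor of $I$ in the completion, if defined. An acceleration candidate is a sequence $I_0 \subset I_1 \subset \cdots$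 of ideals. Levels: level $0$ of $\mathrm{Idl}(X)$ is $\mathrm{Idl}(X)$, and level $n>0$ is the set of unions $\bigcup_i I_i$ of acceleration candidates $I_0 \subset I_1 \subset \cdots$ of elements of level $n-1$. $\mathrm{Idl}(X)$ has finitely many levels if some level is empty. A very-WSTS is a WSTS $\mathcal{S}$ with strong monotonicity whose completion is a deterministic WSTS (in particular $\mathrm{Idl}(X)$ is well-quasi-ordered by $\subseteq$) with strong-strict monotonicity, and such that $\mathrm{Idl}(X)$ has finitely many levels. For $w \in \Sigma^+$ and an ideal $I$, the acceleration $w^\infty(I)$ is $\bigcup_{k \in \mathbb{N}} w^k(I)$ if $I \subset w(I)$, and $I$ otherwise. The Ideal Karp-Miller algorithm builds a tree whose nodes are labeled by pairs $\langle I, n\rangle$ (an ideal and a number of accelerations): it starts with a root labeled $\langle I_0, 0\rangle$; while there is an unmarked node $c : \langle I, n\rangle$, if $c$ has an ancestor labeled $\langle I', n'\rangle$ with $I' = I$ it marks $c$; otherwise, if $c$ has an ancestor $c' : \langle I', n'\rangle$ with $I' \subset I$ and $n' = n$, it replaces the label of $c$ by $\langle w^\infty(I), n+1\rangle$ where $w$ is the sequence of labels on the path from $c'$ to $c$; then, for every $a \in \Sigma$ such that $a(I)$ is defined (with $I$ the current ideal of $c$), it adds an $a$-labeled child of $c$ labeled $\langle a(I), n\rangle$ (with $n$ the current counter of $c$), and marks $c$. It returns the tree. *)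

theory Defs
  imports Main
begin

(* A labelled transition system is given by  step :: 'a => 's => 's => bool
   (step a x y  means  x -a-> y), the alphabet being the (finite) type 'a,
   together with a quasi-ordering le on a carrier set S of states. *)

definition qo_on :: "'s set \<Rightarrow> ('s \<Rightarrow> 's \<Rightarrow> bool) \<Rightarrow> bool" where
  "qo_on S le \<longleftrightarrow> (\<forall>x\<in>S. le x x) \<and> (\<forall>x\<in>S. \<forall>y\<in>S. \<forall>z\<in>S. le x y \<longrightarrow> le y z \<longrightarrow> le x z)"

definition wqo_on :: "'s set \<Rightarrow> ('s \<Rightarrow> 's \<Rightarrow> bool) \<Rightarrow> bool" where
  "wqo_on S le \<longleftrightarrow> qo_on S le \<and>
     (\<forall>f::nat \<Rightarrow> 's. (\<forall>i. f i \<in> S) \<longrightarrow> (\<exists>i j. i < j \<and> le (f i) (f j)))"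

definition any_step :: "('a \<Rightarrow> 's \<Rightarrow> 's \<Rightarrow> bool) \<Rightarrow> 's \<Rightarrow> 's \<Rightarrow> bool" where
  "any_step step x y \<longleftrightarrow> (\<exists>a. step a x y)"

definition lts_monotone :: "'s set \<Rightarrow> ('a \<Rightarrow> 's \<Rightarrow> 's \<Rightarrow> bool) \<Rightarrow> ('s \<Rightarrow> 's \<Rightarrow> bool) \<Rightarrow> bool" where
  "lts_monotone S step le \<longleftrightarrow>
     (\<forall>a. \<forall>x\<in>S. \<forall>y\<in>S. \<forall>x'\<in>S. step a x y \<and> le x x' \<longrightarrow>
        (\<exists>y'\<in>S. (any_step step)\<^sup>*\<^sup>* x' y' \<and> le y y'))"

definition lts_strong_monotone :: "'s set \<Rightarrow> ('a \<Rightarrow> 's \<Rightarrow> 's \<Rightarrow> bool) \<Rightarrow> ('s \<Rightarrow> 's \<Rightarrow> bool) \<Rightarrow> bool" where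
  "lts_strong_monotone S step le \<longleftrightarrow>
     (\<forall>a. \<forall>x\<in>S. \<forall>y\<in>S. \<forall>x'\<in>S. step a x y \<and> le x x' \<longrightarrow>
        (\<exists>y'\<in>S. step a x' y' \<and> le y y'))"

definition lts_strong_strict_monotone :: "'s set \<Rightarrow> ('a \<Rightarrow> 's \<Rightarrow> 's \<Rightarrow> bool) \<Rightarrow> ('s \<Rightarrow> 's \<Rightarrow> bool) \<Rightarrow> bool" where
  "lts_strong_strict_monotone S step le \<longleftrightarrow> lts_strong_monotone S step le \<and>
     (\<forall>a. \<forall>x\<in>S. \<forall>y\<in>S. \<forall>x'\<in>S. step a x y \<and> le x x' \<and> \<not> le x' x \<longrightarrow>
        (\<exists>y'\<in>S. step a x' y' \<and> le y y' \<and> \<not> le y' y))"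

definition is_wsts :: "'s set \<Rightarrow> ('a \<Rightarrow> 's \<Rightarrow> 's \<Rightarrow> bool) \<Rightarrow> ('s \<Rightarrow> 's \<Rightarrow> bool) \<Rightarrow> bool" where
  "is_wsts S step le \<longleftrightarrow> wqo_on S le \<and> lts_monotone S step le"

definition lts_deterministic :: "'s set \<Rightarrow> ('a \<Rightarrow> 's \<Rightarrow> 's \<Rightarrow> bool) \<Rightarrow> bool" where
  "lts_deterministic S step \<longleftrightarrow> (\<forall>a. \<forall>x\<in>S. \<forall>y z. step a x y \<longrightarrow> step a x z \<longrightarrow> y = z)"

definition down_closed :: "('x \<Rightarrow> 'x \<Rightarrow> bool) \<Rightarrow> 'x set \<Rightarrow> bool" where
  "down_closed le D \<longleftrightarrow> (\<forall>x\<in>D. \<forall>y. le y x \<longrightarrow> y \<in> D)"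

definition is_ideal :: "('x \<Rightarrow> 'x \<Rightarrow> bool) \<Rightarrow> 'x set \<Rightarrow> bool" where
  "is_ideal le I \<longleftrightarrow> I \<noteq> {} \<and> down_closed le I \<and> (\<forall>x\<in>I. \<forall>y\<in>I. \<exists>z\<in>I. le x z \<and> le y z)"

definition Idl :: "('x \<Rightarrow> 'x \<Rightarrow> bool) \<Rightarrow> 'x set set" where
  "Idl le = {I. is_ideal le I}"

definition down_closure :: "('x \<Rightarrow> 'x \<Rightarrow> bool) \<Rightarrow> 'x set \<Rightarrow> 'x set" where
  "down_closure le D = {y. \<exists>x\<in>D. le y x}"

definition ideal_decomp :: "('x \<Rightarrow> 'x \<Rightarrow> bool) \<Rightarrow> 'x set \<Rightarrow> 'x set set" where
  "ideal_decomp le D = {I. is_ideal le I \<and> I \<subseteq> D \<and>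
      (\<forall>J. is_ideal le J \<and> I \<subseteq> J \<and> J \<subseteq> D \<longrightarrow> J = I)}"

definition post :: "('a \<Rightarrow> 'x \<Rightarrow> 'x \<Rightarrow> bool) \<Rightarrow> 'a \<Rightarrow> 'x set \<Rightarrow> 'x set" where
  "post step a I = {y. \<exists>x\<in>I. step a x y}"

definition cstep :: "('a \<Rightarrow> 'x \<Rightarrow> 'x \<Rightarrow> bool) \<Rightarrow> ('x \<Rightarrow> 'x \<Rightarrow> bool) \<Rightarrow> 'a \<Rightarrow> 'x set \<Rightarrow> 'x set \<Rightarrow> bool" where
  "cstep step le a I J \<longleftrightarrow> J \<in> ideal_decomp le (down_closure le (post step a I))"

fun level :: "('x \<Rightarrow> 'x \<Rightarrow> bool) \<Rightarrow> nat \<Rightarrow> 'x set set" where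
  "level le 0 = Idl le"
| "level le (Suc n) = {\<Union>(range J) | J. (\<forall>i. J i \<in> level le n) \<and> (\<forall>i. J i \<subset> J (Suc i))}"

definition very_wsts :: "('a \<Rightarrow> 'x \<Rightarrow> 'x \<Rightarrow> bool) \<Rightarrow> ('x \<Rightarrow> 'x \<Rightarrow> bool) \<Rightarrow> bool" where
  "very_wsts step le \<longleftrightarrow>
     finite (UNIV :: 'a set) \<and>
     is_wsts UNIV step le \<and> lts_strong_monotone UNIV step le \<and>
     is_wsts (Idl le) (cstep step le) (\<subseteq>) \<and>
     lts_deterministic (Idl le) (cstep step le) \<and>
     lts_strong_strict_monotone (Idl le) (cstep step le) (\<subseteq>) \<and>
     (\<exists>n. level le n = {})"

definition csucc :: "('a \<Rightarrow> 'x \<Rightarrow> 'x \<Rightarrow> bool) \<Rightarrow> ('x \<Rightarrow> 'x \<Rightarrow> bool) \<Rightarrow> 'a \<Rightarrow> 'x set \<Rightarrow> 'x set option" where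
  "csucc step le a I = (if \<exists>J. cstep step le a I J then Some (THE J. cstep step le a I J) else None)"

fun wsucc :: "('a \<Rightarrow> 'x \<Rightarrow> 'x \<Rightarrow> bool) \<Rightarrow> ('x \<Rightarrow> 'x \<Rightarrow> bool) \<Rightarrow> 'a list \<Rightarrow> 'x set \<Rightarrow> 'x set option" where
  "wsucc step le [] I = Some I"
| "wsucc step le (a # w) I = Option.bind (csucc step le a I) (wsucc step le w)"

fun wpow :: "('a \<Rightarrow> 'x \<Rightarrow> 'x \<Rightarrow> bool) \<Rightarrow> ('x \<Rightarrow> 'x \<Rightarrow> bool) \<Rightarrow> 'a list \<Rightarrow> nat \<Rightarrow> 'x set \<Rightarrow> 'x set option" where
  "wpow step le w 0 I = Some I"
| "wpow step le w (Suc k) I = Option.bind (wpow step le w k I) (wsucc step le w)"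

definition accel :: "('a \<Rightarrow> 'x \<Rightarrow> 'x \<Rightarrow> bool) \<Rightarrow> ('x \<Rightarrow> 'x \<Rightarrow> bool) \<Rightarrow> 'a list \<Rightarrow> 'x set \<Rightarrow> 'x set" where
  "accel step le w I = (if \<exists>J. wsucc step le w I = Some J \<and> I \<subset> J
      then \<Union>{J. \<exists>k. wpow step le w k I = Some J} else I)"

(* Tree nodes are identified with their path from
   the root (a word over the alphabet); a state of the algorithm is
   (set of nodes, labelling by <ideal, number of accelerations>, set of marked nodes). *)

type_synonym ('a, 'x) ikm_state = "'a list set \<times> ('a list \<Rightarrow> 'x set \<times> nat) \<times> 'a list set"

definition proper_ancestor :: "'a list \<Rightarrow> 'a list \<Rightarrow> bool" where
  "proper_ancestor c' c \<longleftrightarrow> (\<exists>w. w \<noteq> [] \<and> c = c' @ w)"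

definition ikm_init :: "'x set \<Rightarrow> ('a, 'x) ikm_state" where
  "ikm_init I0 = ({[]}, (\<lambda>_. (I0, 0)), {})"

definition ikm_expand :: "('a \<Rightarrow> 'x \<Rightarrow> 'x \<Rightarrow> bool) \<Rightarrow> ('x \<Rightarrow> 'x \<Rightarrow> bool) \<Rightarrow> 'a list \<Rightarrow>
    'a list set \<Rightarrow> ('a list \<Rightarrow> 'x set \<times> nat) \<Rightarrow> 'a list set \<Rightarrow> ('a, 'x) ikm_state" where
  "ikm_expand step le c N lab M =
     (let ch = {c @ [a] | a. csucc step le a (fst (lab c)) \<noteq> None} in
      (N \<union> ch,
       (\<lambda>d. if d \<in> ch then (the (csucc step le (last d) (fst (lab c))), snd (lab c)) else lab d),
       M \<union> {c}))"

inductive ikm_step :: "('a \<Rightarrow> 'x \<Rightarrow> 'x \<Rightarrow> bool) \<Rightarrow> ('x \<Rightarrow> 'x \<Rightarrow> bool) \<Rightarrow>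
    ('a, 'x) ikm_state \<Rightarrow> ('a, 'x) ikm_state \<Rightarrow> bool" for step le where
  mark: "\<lbrakk> c \<in> N; c \<notin> M; proper_ancestor c' c; fst (lab c') = fst (lab c) \<rbrakk>
     \<Longrightarrow> ikm_step step le (N, lab, M) (N, lab, M \<union> {c})"
| accelerate: "\<lbrakk> c \<in> N; c \<notin> M;
       \<not> (\<exists>c''. proper_ancestor c'' c \<and> fst (lab c'') = fst (lab c));
       proper_ancestor c' c; fst (lab c') \<subset> fst (lab c); snd (lab c') = snd (lab c) \<rbrakk>
     \<Longrightarrow> ikm_step step le (N, lab, M)
           (ikm_expand step le c N
              (lab(c := (accel step le (drop (length c') c) (fst (lab c)), Suc (snd (lab c))))) M)"
| expand: "\<lbrakk> c \<in> N; c \<notin> M;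
       \<not> (\<exists>c''. proper_ancestor c'' c \<and> fst (lab c'') = fst (lab c));
       \<not> (\<exists>c'. proper_ancestor c' c \<and> fst (lab c') \<subset> fst (lab c) \<and> snd (lab c') = snd (lab c)) \<rbrakk>
     \<Longrightarrow> ikm_step step le (N, lab, M) (ikm_expand step le c N lab M)"

definition ikm_terminates :: "('a \<Rightarrow> 'x \<Rightarrow> 'x \<Rightarrow> bool) \<Rightarrow> ('x \<Rightarrow> 'x \<Rightarrow> bool) \<Rightarrow> 'x set \<Rightarrow> bool" where
  "ikm_terminates step le I0 \<longleftrightarrow>
     \<not> (\<exists>f :: nat \<Rightarrow> ('a, 'x) ikm_state. f 0 = ikm_init I0 \<and> (\<forall>i. ikm_step step le (f i) (f (Suc i))))"

end

(* An infinite run of the algorithm marks a new node in every step and never relabels a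
   marked node, so by Koenig's lemma it builds an infinite branch of marked nodes. Labels
   along a branch follow the completion, and each acceleration produces the union of an
   acceleration candidate, i.e. an ideal one level higher; as there are finitely many
   levels the counters along the branch are bounded, hence eventually constant. From then
   on no node of the branch was accelerated, so each of them was expanded only because it
   was neither equal to nor strictly above an ancestor with the same counter; but the
   well-quasi-ordering of ideals yields a node above an earlier one with the same counter. *)

theory Submission
  imports Defs
begin

lemma is_ideal_Union_chain:
  assumes "C \<noteq> {}" and "\<And>Z. Z \<in> C \<Longrightarrow> is_ideal le Z" and "chain\<^sub>\<subseteq> C"
  shows "is_ideal le (\<Union>C)"
  unfolding is_ideal_def
proof (intro conjI)
  show "\<Union>C \<noteq> {}" using assms(1,2) unfolding is_ideal_def by blast
  show "down_closed le (\<Union>C)"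
    using assms(2) unfolding is_ideal_def down_closed_def by blast
  show "\<forall>x\<in>\<Union>C. \<forall>y\<in>\<Union>C. \<exists>z\<in>\<Union>C. le x z \<and> le y z"
  proof (intro ballI)
    fix x y assume "x \<in> \<Union>C" "y \<in> \<Union>C"
    then obtain X Y where XY: "X \<in> C" "Y \<in> C" "x \<in> X" "y \<in> Y" by blast
    then obtain W where W: "W \<in> C" "x \<in> W" "y \<in> W"
      using assms(3) unfolding chain_subset_def by blast
    then obtain z where "z \<in> W" "le x z" "le y z"
      using assms(2) unfolding is_ideal_def by blast
    then show "\<exists>z\<in>\<Union>C. le x z \<and> le y z" using W(1) by blast
  qed
qed

lemma ideal_decomp_exists:
  assumes "is_ideal le J" and "J \<subseteq> D"
  shows "\<exists>M\<in>ideal_decomp le D. J \<subseteq> M"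
proof -
  define A where "A = {K. is_ideal le K \<and> J \<subseteq> K \<and> K \<subseteq> D}"
  have "\<exists>U\<in>A. \<forall>X\<in>C. X \<subseteq> U" if C: "C \<in> chains A" for C
  proof (cases "C = {}")
    case True
    then show ?thesis using assms unfolding A_def by blast
  next
    case False
    have "C \<subseteq> A" and "chain\<^sub>\<subseteq> C" using C unfolding chains_def by auto
    then have "is_ideal le (\<Union>C)" using False is_ideal_Union_chain unfolding A_def by blast
    then have "\<Union>C \<in> A" using False \<open>C \<subseteq> A\<close> unfolding A_def by blast
    then show ?thesis by blast
  qed
  then obtain M where M: "M \<in> A" and max: "\<forall>X\<in>A. M \<subseteq> X \<longrightarrow> X = M"
    using Zorn_Lemma2[of A] by blast
  have "M \<in> ideal_decomp le D"
    unfolding ideal_decomp_def using M max by (auto simp: A_def)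
  then show ?thesis using M unfolding A_def by blast
qed

lemma ideal_down_closure_singleton:
  assumes "qo_on UNIV le"
  shows "is_ideal le (down_closure le {x})"
  using assms unfolding qo_on_def is_ideal_def down_closure_def down_closed_def by blast

lemma ideal_decomp_covers:
  assumes "qo_on UNIV le" and "x \<in> down_closure le D"
  shows "\<exists>M\<in>ideal_decomp le (down_closure le D). x \<in> M"
proof -
  have "down_closure le {x} \<subseteq> down_closure le D"
    using assms unfolding qo_on_def down_closure_def by blast
  then obtain M where "M \<in> ideal_decomp le (down_closure le D)" "down_closure le {x} \<subseteq> M"
    using ideal_decomp_exists[OF ideal_down_closure_singleton[OF assms(1)]] by blast
  moreover have "x \<in> down_closure le {x}"
    using assms(1) unfolding qo_on_def down_closure_def by blast
  ultimately show ?thesis by blast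
qed

text \<open>In a deterministic completion the ideal decomposition of the successor set is a
  singleton, so the unique successor ideal is the whole downward closure.\<close>

lemma deterministic_cstep_eq:
  assumes "qo_on UNIV le" and "lts_deterministic (Idl le) (cstep step le)"
    and "I \<in> Idl le" and "cstep step le a I J"
  shows "J = down_closure le (post step a I)"
proof
  show "J \<subseteq> down_closure le (post step a I)"
    using assms(4) unfolding cstep_def ideal_decomp_def by blast
  show "down_closure le (post step a I) \<subseteq> J"
  proof
    fix x assume "x \<in> down_closure le (post step a I)"
    then obtain M where "cstep step le a I M" "x \<in> M"
      using ideal_decomp_covers[OF assms(1)] unfolding cstep_def by blast
    then show "x \<in> J" using assms(2-4) unfolding lts_deterministic_def by blast
  qed
qed

lemma cstep_exists:
  assumes "qo_on UNIV le" and "post step a I \<noteq> {}"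
  shows "\<exists>J. cstep step le a I J"
proof -
  obtain x where "x \<in> post step a I" using assms(2) by blast
  then have "x \<in> down_closure le (post step a I)"
    using assms(1) unfolding qo_on_def down_closure_def by blast
  then show ?thesis using ideal_decomp_covers[OF assms(1)] unfolding cstep_def by blast
qed

lemma csucc_eq_Some_iff:
  assumes "lts_deterministic (Idl le) (cstep step le)" and "I \<in> Idl le"
  shows "csucc step le a I = Some J \<longleftrightarrow> cstep step le a I J"
proof -
  have the_cstep: "(THE J. cstep step le a I J) = J'" if "cstep step le a I J'" for J'
    using that assms unfolding lts_deterministic_def by (intro the_equality) blast+
  show ?thesis
  proof
    assume "csucc step le a I = Some J"
    then obtain J' where "cstep step le a I J'" "J = (THE J. cstep step le a I J)"
      unfolding csucc_def by (auto split: if_splits)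
    then show "cstep step le a I J" using the_cstep by simp
  next
    assume "cstep step le a I J"
    then show "csucc step le a I = Some J" unfolding csucc_def using the_cstep by auto
  qed
qed

lemma cstep_Idl: "cstep step le a I J \<Longrightarrow> J \<in> Idl le"
  unfolding cstep_def ideal_decomp_def Idl_def by blast

lemma level_Idl: "K \<in> level le n \<Longrightarrow> K \<in> Idl le"
proof (induction n arbitrary: K)
  case 0
  then show ?case by simp
next
  case (Suc n)
  then obtain C where C: "K = \<Union>(range C)" "\<And>i. C i \<in> Idl le" "\<And>i. C i \<subset> C (Suc i)"
    by auto
  have "C i \<subseteq> C j" if "i \<le> j" for i j
    using lift_Suc_mono_le[of C, OF _ that] C(3) by blast
  then have "chain\<^sub>\<subseteq> (range C)"
    unfolding chain_subset_def using nat_le_linear by blast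
  then show ?case using C(1,2) is_ideal_Union_chain[of "range C" le] unfolding Idl_def by auto
qed

lemma level_bounded:
  assumes "level le N = {}" and "K \<in> level le n"
  shows "n < N"
proof (rule ccontr)
  assume "\<not> n < N"
  then have "level le (N + k) = {}" for k
    using assms(1) by (induction k) auto
  then have "level le n = {}"
    using \<open>\<not> n < N\<close> by (metis le_add_diff_inverse not_less)
  then show False using assms(2) by simp
qed

lemma down_closure_post_Union_shift:
  fixes C :: "nat \<Rightarrow> 'x set"
  assumes "\<And>i j. i \<le> j \<Longrightarrow> C i \<subseteq> C j"
  shows "down_closure le (post step a (\<Union>(range C))) =
    (\<Union>i. down_closure le (post step a (C (i + i0))))"
proof
  show "down_closure le (post step a (\<Union>(range C))) \<subseteq>
    (\<Union>i. down_closure le (post step a (C (i + i0))))"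
  proof
    fix z assume "z \<in> down_closure le (post step a (\<Union>(range C)))"
    then obtain i u v where "u \<in> C i" "step a u v" "le z v"
      unfolding down_closure_def post_def by blast
    moreover have "u \<in> C (i + i0)" using \<open>u \<in> C i\<close> assms[of i "i + i0"] by auto
    ultimately have "z \<in> down_closure le (post step a (C (i + i0)))"
      unfolding down_closure_def post_def by blast
    then show "z \<in> (\<Union>i. down_closure le (post step a (C (i + i0))))" by blast
  qed
qed (unfold down_closure_def post_def, blast)

lemma wsucc_snoc:
  "wsucc step le (v @ [a]) K = Option.bind (wsucc step le v K) (csucc step le a)"
  by (induction v arbitrary: K) (auto split: Option.bind_split)

locale vwsts =
  fixes step :: "'a \<Rightarrow> 'x \<Rightarrow> 'x \<Rightarrow> bool" and le :: "'x \<Rightarrow> 'x \<Rightarrow> bool"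
  assumes very_wsts: "very_wsts step le"
begin

lemma finite_alphabet: "finite (UNIV :: 'a set)"
  and qo: "qo_on UNIV le"
  and wqo_Idl: "wqo_on (Idl le) (\<subseteq>)"
  and deterministic: "lts_deterministic (Idl le) (cstep step le)"
  and strong_strict_monotone: "lts_strong_strict_monotone (Idl le) (cstep step le) (\<subseteq>)"
  and finitely_many_levels: "\<exists>N. level le N = {}"
  using very_wsts unfolding very_wsts_def is_wsts_def wqo_on_def by auto

lemma csucc_iff: "I \<in> Idl le \<Longrightarrow> csucc step le a I = Some J \<longleftrightarrow> cstep step le a I J"
  using csucc_eq_Some_iff[OF deterministic] .

lemma cstep_eq_down_closure:
  "I \<in> Idl le \<Longrightarrow> cstep step le a I J \<Longrightarrow> J = down_closure le (post step a I)"
  using deterministic_cstep_eq[OF qo deterministic] .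

lemma cstep_mono:
  assumes "I \<in> Idl le" "I' \<in> Idl le" "cstep step le a I J" "I \<subseteq> I'"
  shows "\<exists>J'. cstep step le a I' J' \<and> J \<subseteq> J' \<and> (I \<subset> I' \<longrightarrow> J \<subset> J')"
proof (cases "I = I'")
  case True
  then show ?thesis using assms(3) by auto
next
  case False
  have "\<forall>a. \<forall>x\<in>Idl le. \<forall>y\<in>Idl le. \<forall>x'\<in>Idl le.
      cstep step le a x y \<and> x \<subseteq> x' \<and> \<not> x' \<subseteq> x \<longrightarrow>
      (\<exists>y'\<in>Idl le. cstep step le a x' y' \<and> y \<subseteq> y' \<and> \<not> y' \<subseteq> y)"
    using strong_strict_monotone unfolding lts_strong_strict_monotone_def by (rule conjunct2)
  then have "\<exists>J'\<in>Idl le. cstep step le a I' J' \<and> J \<subseteq> J' \<and> \<not> J' \<subseteq> J"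
    using assms cstep_Idl[OF assms(3)] False by auto
  then show ?thesis by blast
qed

text \<open>Successors of an ideal at level \<open>n\<close> stay at level \<open>n\<close>: the image of an acceleration
  candidate is again one, by strong-strict monotonicity.\<close>

lemma cstep_level:
  "K \<in> level le n \<Longrightarrow> cstep step le a K K' \<Longrightarrow> K' \<in> level le n"
proof (induction n arbitrary: K K')
  case 0
  then show ?case using cstep_Idl by simp
next
  case (Suc n)
  then obtain C where C: "K = \<Union>(range C)" "\<And>i. C i \<in> level le n" "\<And>i. C i \<subset> C (Suc i)"
    by auto
  have C_Idl: "C i \<in> Idl le" for i using C(2) by (rule level_Idl)
  have C_mono: "i \<le> j \<Longrightarrow> C i \<subseteq> C j" for i j
    using lift_Suc_mono_le[of C] C(3) by blast
  have K': "K' = down_closure le (post step a K)"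
    using cstep_eq_down_closure[OF level_Idl[OF Suc.prems(1)] Suc.prems(2)] .
  have "K' \<noteq> {}" using cstep_Idl[OF Suc.prems(2)] unfolding Idl_def is_ideal_def by blast
  then obtain i0 x y where "x \<in> C i0" "step a x y"
    unfolding K' C(1) down_closure_def post_def by blast
  then have post_ne: "post step a (C (i + i0)) \<noteq> {}" for i
    using C_mono[of i0 "i + i0"] unfolding post_def by auto
  define C' where "C' i = down_closure le (post step a (C (i + i0)))" for i
  have C'_step: "cstep step le a (C (i + i0)) (C' i)" for i
  proof -
    obtain J where "cstep step le a (C (i + i0)) J" using cstep_exists[OF qo post_ne] by blast
    moreover have "J = C' i" using cstep_eq_down_closure[OF C_Idl calculation] unfolding C'_def .
    ultimately show ?thesis by simp
  qed
  have "C' i \<subset> C' (Suc i)" for i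
  proof -
    obtain J where "cstep step le a (C (Suc i + i0)) J" "C' i \<subset> J"
      using cstep_mono[OF C_Idl C_Idl C'_step[of i], of "Suc i + i0"] C(3)[of "i + i0"] by auto
    moreover have "J = C' (Suc i)"
      using cstep_eq_down_closure[OF C_Idl calculation(1)] unfolding C'_def by simp
    ultimately show ?thesis by simp
  qed
  moreover have "C' i \<in> level le n" for i using Suc.IH[OF C(2) C'_step] .
  moreover have "K' = \<Union>(range C')"
    unfolding K' C(1) C'_def using down_closure_post_Union_shift[OF C_mono] by simp
  ultimately show ?case by auto
qed

lemma csucc_level: "K \<in> level le n \<Longrightarrow> csucc step le a K = Some K' \<Longrightarrow> K' \<in> level le n"
  using cstep_level csucc_iff level_Idl by blast

lemma wsucc_level: "K \<in> level le n \<Longrightarrow> wsucc step le w K = Some K' \<Longrightarrow> K' \<in> level le n"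
proof (induction w arbitrary: K)
  case (Cons a w)
  then show ?case by (auto split: Option.bind_splits intro: Cons.IH csucc_level)
qed simp

lemma wsucc_mono:
  assumes "K \<in> Idl le" "K' \<in> Idl le" "K \<subseteq> K'" "wsucc step le w K = Some L"
  shows "\<exists>L'. wsucc step le w K' = Some L' \<and> L \<subseteq> L' \<and> (K \<subset> K' \<longrightarrow> L \<subset> L')"
  using assms
proof (induction w arbitrary: K K')
  case Nil
  then show ?case by simp
next
  case (Cons a w)
  then obtain M where M: "cstep step le a K M" "wsucc step le w M = Some L"
    using csucc_iff by (auto split: Option.bind_splits)
  obtain M' where M': "cstep step le a K' M'" "M \<subseteq> M'" "K \<subset> K' \<longrightarrow> M \<subset> M'"
    using cstep_mono[OF Cons.prems(1,2) M(1) Cons.prems(3)] by blast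
  obtain L' where "wsucc step le w M' = Some L'" "L \<subseteq> L'" "M \<subset> M' \<longrightarrow> L \<subset> L'"
    using Cons.IH[OF cstep_Idl[OF M(1)] cstep_Idl[OF M'(1)] M'(2) M(2)] by blast
  moreover have "csucc step le a K' = Some M'" using M'(1) csucc_iff Cons.prems(2) by blast
  ultimately show ?case using M'(3) by auto
qed

text \<open>The ideals \<open>w\<^sup>k(K)\<close> form an acceleration candidate, so their union lies one level up.\<close>

lemma accel_level:
  assumes K: "K \<in> level le n" and L: "wsucc step le w K = Some L" and "K \<subset> L"
  shows "accel step le w K \<in> level le (Suc n)"
proof -
  have pow: "\<exists>J J'. wpow step le w k K = Some J \<and> J \<in> level le n \<and>
      wsucc step le w J = Some J' \<and> J \<subset> J'" for k
  proof (induction k)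
    case 0
    then show ?case using assms by simp
  next
    case (Suc k)
    then obtain J J' where J: "wpow step le w k K = Some J" "J \<in> level le n"
        "wsucc step le w J = Some J'" "J \<subset> J'"
      by blast
    moreover have "J' \<in> level le n" using wsucc_level[OF J(2,3)] .
    moreover obtain J'' where "wsucc step le w J' = Some J''" "J' \<subset> J''"
      using wsucc_mono[OF level_Idl[OF J(2)] level_Idl[OF calculation(5)] _ J(3)] J(4) by blast
    ultimately show ?case by auto
  qed
  define F where "F k = the (wpow step le w k K)" for k
  have F: "wpow step le w k K = Some (F k)" for k using pow[of k] unfolding F_def by auto
  have "F k \<subset> F (Suc k)" for k using pow[of k] F[of k] F[of "Suc k"] by auto
  moreover have "F k \<in> level le n" for k using pow[of k] F[of k] by auto
  moreover have "accel step le w K = \<Union>(range F)"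
    unfolding accel_def using assms(2,3) F by auto
  ultimately show ?thesis by auto
qed

end

definition fresh_node :: "('a list \<Rightarrow> 'x set \<times> nat) \<Rightarrow> 'a list \<Rightarrow> bool" where
  "fresh_node lab d \<longleftrightarrow> (\<forall>c'. proper_ancestor c' d \<longrightarrow>
     fst (lab c') \<noteq> fst (lab d) \<and> \<not> (fst (lab c') \<subset> fst (lab d) \<and> snd (lab c') = snd (lab d)))"

lemma fresh_node_cong:
  "(\<And>x. x = d \<or> proper_ancestor x d \<Longrightarrow> f x = g x) \<Longrightarrow> fresh_node f d = fresh_node g d"
  unfolding fresh_node_def by metis

lemma proper_ancestor_snoc: "proper_ancestor e (e @ [b])"
  unfolding proper_ancestor_def by blast

lemma ikm_expand_marks: "snd (snd (ikm_expand step le c N lx M)) = insert c M"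
  unfolding ikm_expand_def Let_def by simp

lemma ikm_expand_nodes:
  "fst (ikm_expand step le c N lx M) = N \<union> {c @ [a] | a. csucc step le a (fst (lx c)) \<noteq> None}"
  unfolding ikm_expand_def Let_def by simp

lemma ikm_expand_label_child:
  "csucc step le a (fst (lx c)) = Some K \<Longrightarrow>
     fst (snd (ikm_expand step le c N lx M)) (c @ [a]) = (K, snd (lx c))"
  unfolding ikm_expand_def Let_def by auto

lemma ikm_expand_label_other:
  "(\<And>a. d \<noteq> c @ [a]) \<Longrightarrow> fst (snd (ikm_expand step le c N lx M)) d = lx d"
  unfolding ikm_expand_def Let_def by auto

context vwsts
begin

definition ikm_inv :: "'a list set \<Rightarrow> ('a list \<Rightarrow> 'x set \<times> nat) \<Rightarrow> 'a list set \<Rightarrow> bool" where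
  "ikm_inv N lab M \<longleftrightarrow>
     M \<subseteq> N \<and>
     (\<forall>d a. d @ [a] \<in> N \<longrightarrow> d \<in> M) \<and>
     (\<forall>d\<in>N. fst (lab d) \<in> level le (snd (lab d))) \<and>
     (\<forall>d a. d @ [a] \<in> N \<longrightarrow> (\<exists>K. csucc step le a (fst (lab d)) = Some K \<and>
        (lab (d @ [a]) = (K, snd (lab d)) \<or>
         d @ [a] \<in> M \<and> snd (lab (d @ [a])) = Suc (snd (lab d))))) \<and>
     (\<forall>d a. d @ [a] \<in> N \<longrightarrow>
        fresh_node lab d \<or> (\<exists>e b. d = e @ [b] \<and> snd (lab d) = Suc (snd (lab e))))"

lemma
  assumes "ikm_inv N lab M"
  shows ikm_inv_marked_nodes: "M \<subseteq> N"
    and ikm_inv_parent_marked: "d @ [a] \<in> N \<Longrightarrow> d \<in> M"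
    and ikm_inv_level: "d \<in> N \<Longrightarrow> fst (lab d) \<in> level le (snd (lab d))"
    and ikm_inv_edge: "d @ [a] \<in> N \<Longrightarrow> \<exists>K. csucc step le a (fst (lab d)) = Some K \<and>
        (lab (d @ [a]) = (K, snd (lab d)) \<or>
         d @ [a] \<in> M \<and> snd (lab (d @ [a])) = Suc (snd (lab d)))"
    and ikm_inv_expanded: "d @ [a] \<in> N \<Longrightarrow>
        fresh_node lab d \<or> (\<exists>e b. d = e @ [b] \<and> snd (lab d) = Suc (snd (lab e)))"
  using assms unfolding ikm_inv_def by blast+

lemma ikm_inv_init: "I0 \<in> Idl le \<Longrightarrow> ikm_inv {[]} (\<lambda>_. (I0, 0)) {}"
  unfolding ikm_inv_def by simp

lemma ikm_inv_ancestor_marked: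
  assumes "ikm_inv N lab M" and "proper_ancestor x d" and "d \<in> N"
  shows "x \<in> M"
proof -
  obtain w where "w \<noteq> []" "d = x @ w" using assms(2) unfolding proper_ancestor_def by blast
  then show ?thesis using assms(3)
  proof (induction w arbitrary: d rule: rev_induct)
    case (snoc a w)
    then show ?case
      using ikm_inv_parent_marked[OF assms(1)] ikm_inv_marked_nodes[OF assms(1)]
      by (cases "w = []") (auto simp flip: append_assoc)
  qed simp
qed

lemma ikm_inv_path:
  assumes "ikm_inv N lab M" and "c' @ v \<in> N"
  shows "snd (lab c') \<le> snd (lab (c' @ v)) \<and>
    (snd (lab (c' @ v)) = snd (lab c') \<longrightarrow>
       wsucc step le v (fst (lab c')) = Some (fst (lab (c' @ v))))"
  using assms(2)
proof (induction v rule: rev_induct)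
  case (snoc a v)
  then have "c' @ v \<in> N"
    using ikm_inv_parent_marked[OF assms(1)] ikm_inv_marked_nodes[OF assms(1)]
    by (metis append_assoc subsetD)
  moreover obtain K where "csucc step le a (fst (lab (c' @ v))) = Some K"
      "lab (c' @ v @ [a]) = (K, snd (lab (c' @ v))) \<or>
       snd (lab (c' @ v @ [a])) = Suc (snd (lab (c' @ v)))"
    using ikm_inv_edge[OF assms(1), of "c' @ v" a] snoc.prems by auto
  ultimately show ?case using snoc.IH by (auto simp: wsucc_snoc)
qed simp

lemma ikm_inv_mark:
  "ikm_inv N lab M \<Longrightarrow> c \<in> N \<Longrightarrow> ikm_inv N lab (insert c M)"
  unfolding ikm_inv_def by blast

context
  fixes N lab M c lx N' lab' M'
  assumes inv: "ikm_inv N lab M" and c: "c \<in> N" "c \<notin> M"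
    and lx: "\<And>d. d \<noteq> c \<Longrightarrow> lx d = lab d"
    and expand: "ikm_expand step le c N lx M = (N', lab', M')"
begin

lemma expand_marks: "M' = insert c M"
  using ikm_expand_marks[of step le c N lx M] expand by simp

lemma expand_label_old: "d \<in> N \<Longrightarrow> lab' d = lx d"
  using ikm_expand_label_other[of d c step le N lx M] ikm_inv_parent_marked[OF inv] c(2) expand
  by fastforce

lemma expand_label_marked: "d \<in> M \<Longrightarrow> lab' d = lab d"
  using expand_label_old[of d] lx[of d] ikm_inv_marked_nodes[OF inv] c(2) by (metis subsetD)

lemma expand_new_node:
  assumes "d \<in> N'" "d \<notin> N"
  obtains a K where "d = c @ [a]" "csucc step le a (fst (lx c)) = Some K"
    "lab' d = (K, snd (lx c))"
  using assms ikm_expand_nodes[of step le c N lx M] ikm_expand_label_child[of step le _ lx c _ N M]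
    expand by fastforce

lemma expand_tree: "M' \<subseteq> N'" "d @ [a] \<in> N' \<Longrightarrow> d \<in> M'"
  using ikm_expand_nodes[of step le c N lx M] expand c(1) ikm_inv_marked_nodes[OF inv]
    ikm_inv_parent_marked[OF inv] expand_marks
  by (auto elim: expand_new_node)

lemma expand_level:
  assumes "fst (lx c) \<in> level le (snd (lx c))" and "d \<in> N'"
  shows "fst (lab' d) \<in> level le (snd (lab' d))"
proof (cases "d \<in> N")
  case True
  then show ?thesis
    using assms(1) expand_label_old lx ikm_inv_level[OF inv] by (cases "d = c") auto
next
  case False
  then show ?thesis using assms csucc_level by (auto elim: expand_new_node[of d])
qed

lemma expand_edge:
  assumes parent: "\<And>e b. c = e @ [b] \<Longrightarrow> \<exists>K. csucc step le b (fst (lab e)) = Some K \<and>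
      (lx c = (K, snd (lab e)) \<or> snd (lx c) = Suc (snd (lab e)))"
    and "d @ [a] \<in> N'"
  shows "\<exists>K. csucc step le a (fst (lab' d)) = Some K \<and>
    (lab' (d @ [a]) = (K, snd (lab' d)) \<or>
     d @ [a] \<in> M' \<and> snd (lab' (d @ [a])) = Suc (snd (lab' d)))"
proof (cases "d @ [a] \<in> N")
  case old: True
  have parent_label: "lab' d = lab d"
    using old expand_label_marked ikm_inv_parent_marked[OF inv] by blast
  have child_label: "lab' (d @ [a]) = lx (d @ [a])" using old expand_label_old by blast
  show ?thesis
  proof (cases "d @ [a] = c")
    case True
    then show ?thesis using parent[of d a] parent_label child_label expand_marks by auto
  next
    case False
    then show ?thesis
      using ikm_inv_edge[OF inv old] lx[of "d @ [a]"] expand_marks parent_label child_label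
      by auto
  qed
next
  case False
  with assms(2) obtain a' K where "d @ [a] = c @ [a']" "csucc step le a' (fst (lx c)) = Some K"
      "lab' (d @ [a]) = (K, snd (lx c))"
    by (rule expand_new_node)
  then show ?thesis using expand_label_old[OF c(1)] by auto
qed

lemma expand_fresh:
  assumes "fresh_node lx c \<or> (\<exists>e b. c = e @ [b] \<and> snd (lx c) = Suc (snd (lab e)))"
    and "d @ [a] \<in> N'"
  shows "fresh_node lab' d \<or> (\<exists>e b. d = e @ [b] \<and> snd (lab' d) = Suc (snd (lab' e)))"
proof (cases "d @ [a] \<in> N")
  case True
  then have "d \<in> M" using ikm_inv_parent_marked[OF inv] by blast
  then have "lab' x = lab x" if "x = d \<or> proper_ancestor x d" for x
    using that expand_label_marked ikm_inv_ancestor_marked[OF inv] ikm_inv_marked_nodes[OF inv]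
    by blast
  then show ?thesis
    using fresh_node_cong[of d lab' lab] ikm_inv_expanded[OF inv True] proper_ancestor_snoc
    by metis
next
  case False
  then have "d = c" using assms(2) by (auto elim: expand_new_node)
  have "lab' x = lx x" if "x = c \<or> proper_ancestor x c" for x
    using that c(1) expand_label_old ikm_inv_ancestor_marked[OF inv] ikm_inv_marked_nodes[OF inv]
    by blast
  moreover have "lx e = lab e" if "c = e @ [b]" for e b using that lx by auto
  ultimately show ?thesis
    using assms(1) fresh_node_cong[of c lab' lx] proper_ancestor_snoc \<open>d = c\<close> by metis
qed

lemma expand_inv:
  assumes "fst (lx c) \<in> level le (snd (lx c))"
    and "\<And>e b. c = e @ [b] \<Longrightarrow> \<exists>K. csucc step le b (fst (lab e)) = Some K \<and>
      (lx c = (K, snd (lab e)) \<or> snd (lx c) = Suc (snd (lab e)))"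
    and "fresh_node lx c \<or> (\<exists>e b. c = e @ [b] \<and> snd (lx c) = Suc (snd (lab e)))"
  shows "ikm_inv N' lab' M'"
  unfolding ikm_inv_def
  using expand_tree expand_level[OF assms(1)] expand_edge[OF assms(2)] expand_fresh[OF assms(3)]
  by blast

end

lemma ikm_inv_unmarked_child:
  assumes "ikm_inv N lab M" "e @ [b] \<in> N" "e @ [b] \<notin> M"
  shows "\<exists>K. csucc step le b (fst (lab e)) = Some K \<and> lab (e @ [b]) = (K, snd (lab e))"
  using ikm_inv_edge[OF assms(1,2)] assms(3) by blast

text \<open>An unmarked node strictly above an ancestor with the same counter lies at the end of a
  pumping path: its ideal strictly grows under the path word, so accelerating lifts it one level.\<close>

lemma accelerate_level:
  assumes inv: "ikm_inv N lab M" and "c \<in> N"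
    and "proper_ancestor c' c" "fst (lab c') \<subset> fst (lab c)" "snd (lab c') = snd (lab c)"
  shows "accel step le (drop (length c') c) (fst (lab c)) \<in> level le (Suc (snd (lab c)))"
proof -
  obtain w where w: "c = c' @ w" using assms(3) unfolding proper_ancestor_def by blast
  have "c' \<in> N"
    using ikm_inv_ancestor_marked[OF inv assms(3,2)] ikm_inv_marked_nodes[OF inv] by blast
  have path: "wsucc step le w (fst (lab c')) = Some (fst (lab c))"
    using ikm_inv_path[OF inv, of c' w] assms(2,5) w by simp
  have c_level: "fst (lab c) \<in> level le (snd (lab c))"
    using ikm_inv_level[OF inv assms(2)] .
  obtain L where "wsucc step le w (fst (lab c)) = Some L" "fst (lab c) \<subset> L"
    using wsucc_mono[OF level_Idl[OF ikm_inv_level[OF inv \<open>c' \<in> N\<close>]] level_Idl[OF c_level]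
        _ path] assms(4,5) by auto
  then show ?thesis using accel_level[OF c_level] w by simp
qed

lemma ikm_step_inv:
  assumes "ikm_step step le (N, lab, M) (N', lab', M')" and inv: "ikm_inv N lab M"
  shows "ikm_inv N' lab' M'"
  using assms(1)
proof (cases rule: ikm_step.cases)
  case (mark c)
  then show ?thesis using ikm_inv_mark[OF inv] by simp
next
  case (expand c)
  show ?thesis
  proof (rule expand_inv[OF inv expand(2,3) _ expand(1)[symmetric]])
    show "fst (lab c) \<in> level le (snd (lab c))" using ikm_inv_level[OF inv expand(2)] .
    show "fresh_node lab c \<or> (\<exists>e b. c = e @ [b] \<and> snd (lab c) = Suc (snd (lab e)))"
      using expand(4,5) unfolding fresh_node_def by blast
  qed (use ikm_inv_unmarked_child[OF inv] expand(2,3) in auto)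
next
  case (accelerate c c')
  define lx where
    "lx = lab(c := (accel step le (drop (length c') c) (fst (lab c)), Suc (snd (lab c))))"
  obtain e b where c: "c = e @ [b]"
    using accelerate(5) unfolding proper_ancestor_def by (metis append_is_Nil_conv rev_exhaust)
  then obtain K where K: "csucc step le b (fst (lab e)) = Some K" "lab c = (K, snd (lab e))"
    using ikm_inv_unmarked_child[OF inv] accelerate(2,3) by blast
  show ?thesis
  proof (rule expand_inv[OF inv accelerate(2,3) _ accelerate(1)[symmetric, folded lx_def]])
    show "fst (lx c) \<in> level le (snd (lx c))"
      using accelerate_level[OF inv accelerate(2,5-7)] unfolding lx_def by simp
    show "fresh_node lx c \<or> (\<exists>e b. c = e @ [b] \<and> snd (lx c) = Suc (snd (lab e)))"
      using c K unfolding lx_def by auto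
  qed (use c K in \<open>auto simp: lx_def\<close>)
qed

lemma ikm_step_marks:
  assumes "ikm_step step le (N, lab, M) (N', lab', M')" and inv: "ikm_inv N lab M"
  shows "(\<exists>c. c \<notin> M \<and> M' = insert c M) \<and> (\<forall>d\<in>M. lab' d = lab d)"
  using assms(1)
proof (cases rule: ikm_step.cases)
  case (expand c)
  then show ?thesis
    using expand_marks[OF inv expand(2,3) _ expand(1)[symmetric]]
      expand_label_marked[OF inv expand(2,3) _ expand(1)[symmetric]] by auto
next
  case (accelerate c c')
  then show ?thesis
    using expand_marks[OF inv accelerate(2,3) _ accelerate(1)[symmetric]]
      expand_label_marked[OF inv accelerate(2,3) _ accelerate(1)[symmetric]] by auto
qed auto

end

lemma infinite_extension_step:
  fixes T :: "'a list set"
  assumes "finite (UNIV :: 'a set)" and "infinite {v. u @ v \<in> T}"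
  shows "\<exists>a. infinite {v. (u @ [a]) @ v \<in> T}"
proof (rule ccontr)
  assume "\<nexists>a. infinite {v. (u @ [a]) @ v \<in> T}"
  then have "finite (insert [] (\<Union>a. Cons a ` {v. (u @ [a]) @ v \<in> T}))"
    using assms(1) by auto
  moreover have "{v. u @ v \<in> T} \<subseteq> insert [] (\<Union>a. Cons a ` {v. (u @ [a]) @ v \<in> T})"
  proof
    fix v assume "v \<in> {v. u @ v \<in> T}"
    then show "v \<in> insert [] (\<Union>a. Cons a ` {v. (u @ [a]) @ v \<in> T})" by (cases v) auto
  qed
  ultimately show False using assms(2) finite_subset by blast
qed

lemma prefix_closed_infinite_branch:
  fixes T :: "'a list set"
  assumes "finite (UNIV :: 'a set)" and "infinite T" and "\<And>u v. u @ v \<in> T \<Longrightarrow> u \<in> T"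
  obtains b a where "b 0 = []" "\<And>k. b (Suc k) = b k @ [a k]" "\<And>k. b k \<in> T"
proof -
  define next_letter where "next_letter u = (SOME a. infinite {v. (u @ [a]) @ v \<in> T})" for u
  define b where "b k = rec_nat [] (\<lambda>_ u. u @ [next_letter u]) k" for k
  have b_Suc: "b (Suc k) = b k @ [next_letter (b k)]" for k unfolding b_def by simp
  have "infinite {v. b k @ v \<in> T}" for k
  proof (induction k)
    case 0
    then show ?case using assms(2) by (simp add: b_def)
  next
    case (Suc k)
    then show ?case
      unfolding b_Suc next_letter_def by (rule someI_ex[OF infinite_extension_step[OF assms(1)]])
  qed
  then have "b k \<in> T" for k using not_finite_existsD assms(3) by blast
  then show ?thesis using that[of b "\<lambda>k. next_letter (b k)"] b_Suc by (simp add: b_def)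
qed

lemma branch_eq_map:
  assumes "b 0 = []" and "\<And>k. b (Suc k) = b k @ [a k]"
  shows "b k = map a [0..<k]"
  using assms by (induction k) auto

lemma branch_proper_ancestor_iff:
  assumes "b 0 = []" and "\<And>k. b (Suc k) = b k @ [a k]"
  shows "proper_ancestor x (b k) \<longleftrightarrow> (\<exists>m<k. x = b m)"
proof
  assume "proper_ancestor x (b k)"
  then obtain w where "w \<noteq> []" "map a [0..<k] = x @ w"
    unfolding proper_ancestor_def branch_eq_map[of b a, OF assms] by blast
  then have "length x < k" "x = take (length x) (map a [0..<k])"
    by (auto dest: arg_cong[of _ _ length])
  then show "\<exists>m<k. x = b m" by (auto simp: branch_eq_map[of b a, OF assms] take_map)
next
  assume "\<exists>m<k. x = b m"
  then obtain m where "m < k" "x = b m" by blast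
  moreover have "[0..<k] = [0..<m] @ [m..<k]"
    using upt_add_eq_append[of 0 m "k - m"] \<open>m < k\<close> by simp
  ultimately have "b k = x @ map a [m..<k]" by (simp add: branch_eq_map[of b a, OF assms])
  then show "proper_ancestor x (b k)" unfolding proper_ancestor_def using \<open>m < k\<close> by auto
qed

definition fresh_at :: "(nat \<Rightarrow> 'x set) \<Rightarrow> (nat \<Rightarrow> nat) \<Rightarrow> nat \<Rightarrow> bool" where
  "fresh_at J n k \<longleftrightarrow> (\<forall>m<k. J m \<noteq> J k \<and> \<not> (J m \<subset> J k \<and> n m = n k))"

lemma wqo_bounded_counter_not_fresh:
  assumes "wqo_on A (\<subseteq>)" and "\<And>k. J k \<in> A"
    and "\<And>k. n k \<le> n (Suc k)" and "\<And>k. n k < B"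
  shows "\<exists>k. \<not> fresh_at J n (Suc k) \<and> n (Suc k) = n k"
proof -
  have n_mono: "i \<le> j \<Longrightarrow> n i \<le> n j" for i j using lift_Suc_mono_le[of n] assms(3) by blast
  have "range n \<subseteq> {..<B}" using assms(4) by blast
  then have fin: "finite (range n)" using finite_subset by blast
  obtain k0 where k0: "n k0 = Max (range n)" using Max_in[OF fin] by auto
  have n_const: "k0 \<le> k \<Longrightarrow> n k = n k0" for k
    using n_mono[of k0 k] Max_ge[OF fin, of "n k"] k0 by simp
  have "\<forall>f :: nat \<Rightarrow> _. (\<forall>i. f i \<in> A) \<longrightarrow> (\<exists>i j. i < j \<and> f i \<subseteq> f j)"
    using assms(1) unfolding wqo_on_def by (rule conjunct2)
  then obtain i j where ij: "i < j" "J (Suc k0 + i) \<subseteq> J (Suc k0 + j)"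
    using assms(2) by (meson spec[of _ "\<lambda>j. J (Suc k0 + j)"])
  define k where "k = k0 + j"
  have "n (Suc k0 + i) = n (Suc k)" "n (Suc k) = n k"
    using n_const[of "Suc k0 + i"] n_const[of "Suc k"] n_const[of k] unfolding k_def by simp_all
  moreover have "Suc k0 + i < Suc k" "J (Suc k0 + i) \<subseteq> J (Suc k)"
    using ij unfolding k_def by simp_all
  ultimately have "\<not> fresh_at J n (Suc k)" unfolding fresh_at_def by blast
  then show ?thesis using \<open>n (Suc k) = n k\<close> by blast
qed

lemma frozen_labels_limit:
  assumes "\<And>i. M i \<subseteq> M (Suc i)" and "\<And>i d. d \<in> M i \<Longrightarrow> L (Suc i) d = L i d"
  shows "\<exists>Lab. \<forall>i. \<forall>d\<in>M i. L i d = Lab d"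
proof -
  have frozen: "L j d = L i d" if "d \<in> M i" "i \<le> j" for i j d
    using \<open>i \<le> j\<close>
  proof (induction j rule: dec_induct)
    case (step j)
    have "d \<in> M j" using lift_Suc_mono_le[of M, OF assms(1) \<open>i \<le> j\<close>] \<open>d \<in> M i\<close> by blast
    then show ?case using assms(2) step.IH by simp
  qed simp
  define Lab where "Lab d = L (SOME i. d \<in> M i) d" for d
  have "L i d = Lab d" if "d \<in> M i" for i d
  proof -
    have "d \<in> M (SOME i. d \<in> M i)" using that by (rule someI)
    then show ?thesis
      using frozen[OF that, of "max i (SOME i. d \<in> M i)"]
        frozen[of d "SOME i. d \<in> M i" "max i (SOME i. d \<in> M i)"]
      unfolding Lab_def by simp
  qed
  then show ?thesis by blast
qed

lemma insert_chain_infinite: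
  assumes "\<And>i. \<exists>c. c \<notin> M i \<and> M (Suc i) = insert c (M i)"
  shows "infinite (\<Union>i. M i)"
proof
  obtain c where c: "\<And>i. c i \<notin> M i" "\<And>i. M (Suc i) = insert (c i) (M i)"
    using assms by metis
  have mono: "i \<le> j \<Longrightarrow> M i \<subseteq> M j" for i j using lift_Suc_mono_le[of M] c(2) by blast
  have "inj c"
  proof (rule injI)
    fix i j assume "c i = c j"
    then show "i = j" using c mono[of "Suc i" j] mono[of "Suc j" i]
      by (metis insertI1 linorder_neqE_nat subsetD Suc_leI)
  qed
  moreover assume "finite (\<Union>i. M i)"
  then have "finite (range c)" by (rule finite_subset[rotated]) (use c(2) in auto)
  ultimately show False using finite_imageD by blast
qed

context vwsts
begin

lemma ikm_inv_marked_prefix: "ikm_inv N lab M \<Longrightarrow> u @ v \<in> M \<Longrightarrow> u \<in> M"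
  using ikm_inv_ancestor_marked[of N lab M u "u @ v"] ikm_inv_marked_nodes
  unfolding proper_ancestor_def by (cases "v = []") auto

lemma ikm_inv_branch:
  assumes inv: "ikm_inv N lab M" and b: "b 0 = []" "\<And>k. b (Suc k) = b k @ [a k]"
    and "b (Suc k) \<in> N" and lab: "\<And>m. m \<le> Suc k \<Longrightarrow> lab (b m) = (J m, n m)"
  shows "J k \<in> level le (n k)"
    and "n k \<le> n (Suc k)"
    and "fresh_at J n k \<or> (\<exists>k'. k = Suc k' \<and> n k = Suc (n k'))"
proof -
  have child: "b k @ [a k] \<in> N" using assms(4) b(2) by simp
  then have "b k \<in> N" using ikm_inv_parent_marked[OF inv] ikm_inv_marked_nodes[OF inv] by blast
  then show "J k \<in> level le (n k)" using ikm_inv_level[OF inv \<open>b k \<in> N\<close>] lab[of k] by simp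
  show "n k \<le> n (Suc k)" using ikm_inv_edge[OF inv child] lab[of k] lab[of "Suc k"] b(2) by auto
  have ancestors: "proper_ancestor x (b k) \<longleftrightarrow> (\<exists>m<k. x = b m)" for x
    by (rule branch_proper_ancestor_iff[of b a, OF b])
  show "fresh_at J n k \<or> (\<exists>k'. k = Suc k' \<and> n k = Suc (n k'))"
    using ikm_inv_expanded[OF inv child]
  proof
    assume fresh: "fresh_node lab (b k)"
    have "J m \<noteq> J k \<and> \<not> (J m \<subset> J k \<and> n m = n k)" if "m < k" for m
      using fresh that lab[of m] lab[of k] unfolding fresh_node_def ancestors by fastforce
    then show ?thesis unfolding fresh_at_def by blast
  next
    assume "\<exists>e c. b k = e @ [c] \<and> snd (lab (b k)) = Suc (snd (lab e))"
    then obtain e c where "b k = e @ [c]" "snd (lab (b k)) = Suc (snd (lab e))" by blast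
    moreover obtain k' where "k = Suc k'" using b(1) \<open>b k = e @ [c]\<close> by (cases k) auto
    ultimately show ?thesis using b(2) lab[of k] lab[of k'] by auto
  qed
qed

lemma ikm_inv_limit_branch:
  assumes inv: "\<And>i. ikm_inv (N i) (L i) (M i)"
    and b: "b 0 = []" "\<And>k. b (Suc k) = b k @ [a k]" "\<And>k. b k \<in> (\<Union>i. M i)"
    and lab: "\<And>i m. b m \<in> M i \<Longrightarrow> L i (b m) = (J m, n m)"
  shows "J k \<in> level le (n k)"
    and "n k \<le> n (Suc k)"
    and "fresh_at J n k \<or> (\<exists>k'. k = Suc k' \<and> n k = Suc (n k'))"
proof -
  obtain i where i: "b (Suc k) \<in> M i" using b(3) by blast
  have marked: "b m \<in> M i" if "m \<le> Suc k" for m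
  proof (cases "m = Suc k")
    case False
    then have "proper_ancestor (b m) (b (Suc k))"
      using branch_proper_ancestor_iff[of b a, OF b(1,2)] that by (metis le_less)
    then show ?thesis
      using ikm_inv_ancestor_marked[OF inv] ikm_inv_marked_nodes[OF inv] i by blast
  qed (use i in simp)
  have "b (Suc k) \<in> N i" using i ikm_inv_marked_nodes[OF inv] by blast
  moreover have "L i (b m) = (J m, n m)" if "m \<le> Suc k" for m by (rule lab[OF marked[OF that]])
  ultimately show "J k \<in> level le (n k)" "n k \<le> n (Suc k)"
      "fresh_at J n k \<or> (\<exists>k'. k = Suc k' \<and> n k = Suc (n k'))"
    using ikm_inv_branch[of "N i" "L i" "M i" b a, OF inv b(1,2)] by blast+
qed

lemma ikm_terminates:
  assumes "I0 \<in> Idl le"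
  shows "ikm_terminates step le I0"
  unfolding ikm_terminates_def
proof (intro notI, elim exE conjE)
  fix f :: "nat \<Rightarrow> ('a, 'x) ikm_state"
  assume f0: "f 0 = ikm_init I0" and run: "\<forall>i. ikm_step step le (f i) (f (Suc i))"
  define Nf where "Nf i = fst (f i)" for i
  define Lf where "Lf i = fst (snd (f i))" for i
  define Mf where "Mf i = snd (snd (f i))" for i
  have f: "f i = (Nf i, Lf i, Mf i)" for i by (simp add: Nf_def Lf_def Mf_def)
  have step: "ikm_step step le (Nf i, Lf i, Mf i) (Nf (Suc i), Lf (Suc i), Mf (Suc i))" for i
    using run f by metis
  have inv: "ikm_inv (Nf i) (Lf i) (Mf i)" for i
  proof (induction i)
    case 0
    then show ?case using f0 f[of 0] ikm_inv_init[OF assms] by (simp add: ikm_init_def)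
  next
    case (Suc i)
    then show ?case by (rule ikm_step_inv[OF step])
  qed
  have marks: "\<exists>c. c \<notin> Mf i \<and> Mf (Suc i) = insert c (Mf i)"
    and frozen: "\<forall>d\<in>Mf i. Lf (Suc i) d = Lf i d" for i
    using ikm_step_marks[OF step inv] by blast+
  have "Mf i \<subseteq> Mf (Suc i)" for i using marks[of i] by blast
  then obtain Lab where Lab: "\<And>i d. d \<in> Mf i \<Longrightarrow> Lf i d = Lab d"
    using frozen_labels_limit[of Mf Lf] frozen by blast
  have "u @ v \<in> (\<Union>i. Mf i) \<Longrightarrow> u \<in> (\<Union>i. Mf i)" for u v
    using ikm_inv_marked_prefix[OF inv] by blast
  then obtain b a where b: "b 0 = []" "\<And>k. b (Suc k) = b k @ [a k]" "\<And>k. b k \<in> (\<Union>i. Mf i)"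
    using prefix_closed_infinite_branch[OF finite_alphabet insert_chain_infinite[of Mf, OF marks]]
    by blast
  define J where "J k = fst (Lab (b k))" for k
  define n where "n k = snd (Lab (b k))" for k
  have "b m \<in> Mf i \<Longrightarrow> Lf i (b m) = (J m, n m)" for i m
    using Lab unfolding J_def n_def by simp
  note branch = ikm_inv_limit_branch[of Nf Lf Mf b a, OF inv b this]
  obtain B where B: "level le B = {}" using finitely_many_levels by blast
  have "\<exists>k. \<not> fresh_at J n (Suc k) \<and> n (Suc k) = n k"
  proof (rule wqo_bounded_counter_not_fresh[OF wqo_Idl])
    show "J k \<in> Idl le" "n k \<le> n (Suc k)" "n k < B" for k
      using branch(1,2) level_Idl level_bounded[OF B] by blast+
  qed
  then show False using branch(3) by fastforce
qed

end

theorem theorem8: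
  fixes step :: "'a \<Rightarrow> 'x \<Rightarrow> 'x \<Rightarrow> bool" and le :: "'x \<Rightarrow> 'x \<Rightarrow> bool" and I0 :: "'x set"
  assumes "very_wsts step le"
    and "I0 \<in> Idl le"
  shows "ikm_terminates step le I0"
proof -
  interpret vwsts step le using assms(1) by unfold_locales
  show ?thesis using assms(2) by (rule ikm_terminates)
qed

end
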